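(* Consider a multi-sender single-uniprior index-coding instance with binary messages, information-flow graph $\mathcal{G}$ and message graph $\mathcal{U}$, and let $\mathcal{V}_S$ be the vertex set of a message-disconnected leaf SCC of $\mathcal{G}$. Form $(\mathcal{G}',\mathcal{U}')$ by appending this leaf SCC: add a new dummy vertex $n+1$ to both $\mathcal{G}$ and $\mathcal{U}$ (isolated in $\mathcal{U}'$), representing a receiver whose prior message $x_{n+1}$ is the constant $0$ (known to all receivers and never transmitted), and add an arc $(v\to n+1)$ in $\mathcal{G}$ for an arbitrarily chosen $v\in\mathcal{V}_S$ (so the dummy receiver requests $x_v$); the senders are unchanged. Then \[ N_{\mathrm{SCC}}(\mathcal{G}') = N_{\mathrm{SCC}}(\mathcal{G})-1,\qquad \tilde{\ell}^*(\mathcal{G}',\mathcal{U}')=\tilde{\ell}^*(\mathcal{G},\mathcal{U}),\qquad V_{\mathrm{out}}(\mathcal{G}')=V_{\mathrm{out}}(\mathcal{G}), \] where $N_{\mathrm{SCC}}(\cdot)$ denotes the number of leaf SCCs.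
   Context: Multi-sender single-uniprior index coding with binary messages: there are $n$ receivers and $n$ independent messages $x_1,\dots,x_n$, each a single bit uniformly distributed on $\{0,1\}$. Receiver $i$ knows $x_i$ a priori and requests a set of messages not containing $x_i$. The information-flow graph is the directed graph $\mathcal{G}=(\mathcal{V},\mathcal{A})$, $\mathcal{V}=\{1,\dots,n\}$, with an arc $(j\to i)$ iff receiver $i$ requests $x_j$. There are $S$ senders; sender $s$ knows a subset $\mathcal{M}_s$ of the messages, and every message is known to some sender. An index code consists of, for each sender $s$, an encoding function mapping the messages in $\mathcal{M}_s$ to $\ell_s$ bits, and for each receiver $i$ a decoding function that, from all senders' outputs together with its prior message, returns every message requested by $i$, for all message values; its length is $\sum_s \ell_s$. $\tilde{\ell}^*(\mathcal{G},\mathcal{U})$ is the minimum length of an index code for the instance. The message graph $\mathcal{U}$ is the undirected graph on $\mathcal{V}$ with an edge $\{i,j\}$ iff some sender knows both $x_i$ and $x_j$. A leaf vertex of $\mathcal{G}$ has no outgoing arcs; $V_{\mathrm{out}}(\mathcal{G})$ is the number of non-leaf vertices. A leaf SCC of $\mathcal{G}$ is a strongly connected component with at least two vertices and no arc from it to a vertex outside it. A leaf SCC with vertex set $\mathcal{V}_S$ is message-disconnected iff there are two vertices in $\mathcal{V}_S$ that are not joined by any path in $\mathcal{U}$. *)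

theory Defs
  imports Main
begin

text \<open>Receivers/messages are the naturals in V (V = {1..n} in the paper).
  Arcs: (j, i) \<in> A iff receiver i requests message x_j.
  Senders are indexed by s < S; sender s knows the message set M s.\<close>

definition wf_instance :: "nat \<Rightarrow> (nat \<times> nat) set \<Rightarrow> nat \<Rightarrow> (nat \<Rightarrow> nat set) \<Rightarrow> bool" where
  "wf_instance n A S M \<longleftrightarrow>
     A \<subseteq> {1..n} \<times> {1..n} \<and> (\<forall>i. (i, i) \<notin> A) \<and>
     (\<forall>s<S. M s \<subseteq> {1..n}) \<and> (\<forall>j\<in>{1..n}. \<exists>s<S. j \<in> M s)"

definition is_scc :: "nat set \<Rightarrow> (nat \<times> nat) set \<Rightarrow> nat set \<Rightarrow> bool" where
  "is_scc V A C \<longleftrightarrow> C \<noteq> {} \<and> C \<subseteq> V \<and>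
     (\<forall>u\<in>C. \<forall>w\<in>C. (u, w) \<in> A\<^sup>*) \<and>
     (\<forall>u\<in>C. \<forall>w\<in>V. (u, w) \<in> A\<^sup>* \<and> (w, u) \<in> A\<^sup>* \<longrightarrow> w \<in> C)"

definition leaf_scc :: "nat set \<Rightarrow> (nat \<times> nat) set \<Rightarrow> nat set \<Rightarrow> bool" where
  "leaf_scc V A C \<longleftrightarrow> is_scc V A C \<and> card C \<ge> 2 \<and>
     (\<forall>u\<in>C. \<forall>w. (u, w) \<in> A \<longrightarrow> w \<in> C)"

definition N_SCC :: "nat set \<Rightarrow> (nat \<times> nat) set \<Rightarrow> nat" where
  "N_SCC V A = card {C. leaf_scc V A C}"

definition V_out :: "nat set \<Rightarrow> (nat \<times> nat) set \<Rightarrow> nat" where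
  "V_out V A = card {i \<in> V. \<exists>j. (i, j) \<in> A}"

definition msg_edges :: "nat \<Rightarrow> (nat \<Rightarrow> nat set) \<Rightarrow> (nat \<times> nat) set" where
  "msg_edges S M = {(i, j). i \<noteq> j \<and> (\<exists>s<S. i \<in> M s \<and> j \<in> M s)}"

definition message_disconnected :: "nat \<Rightarrow> (nat \<Rightarrow> nat set) \<Rightarrow> nat set \<Rightarrow> bool" where
  "message_disconnected S M C \<longleftrightarrow> (\<exists>u\<in>C. \<exists>w\<in>C. (u, w) \<notin> (msg_edges S M)\<^sup>*)"

text \<open>Messages are x :: nat \<Rightarrow> bool; the messages
  indexed by D are dummy messages fixed to the constant 0 (False).\<close>
definition has_index_code ::
  "nat set \<Rightarrow> (nat \<times> nat) set \<Rightarrow> nat \<Rightarrow> (nat \<Rightarrow> nat set) \<Rightarrow> nat set \<Rightarrow> nat \<Rightarrow> bool" where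
  "has_index_code V A S M D L \<longleftrightarrow>
    (\<exists>(l :: nat \<Rightarrow> nat) (E :: nat \<Rightarrow> (nat \<Rightarrow> bool) \<Rightarrow> bool list)
       (Dec :: nat \<Rightarrow> nat \<Rightarrow> bool list list \<Rightarrow> bool \<Rightarrow> bool).
       (\<forall>s<S. \<forall>x y. (\<forall>j\<in>M s. x j = y j) \<longrightarrow> E s x = E s y) \<and>
       (\<forall>s<S. \<forall>x. length (E s x) = l s) \<and>
       (\<Sum>s<S. l s) = L \<and>
       (\<forall>i\<in>V. \<forall>j. (j, i) \<in> A \<longrightarrow>
          (\<forall>x. (\<forall>d\<in>D. x d = False) \<longrightarrow>
             Dec i j (map (\<lambda>s. E s x) [0..<S]) (x i) = x j)))"

definition ell_star ::
  "nat set \<Rightarrow> (nat \<times> nat) set \<Rightarrow> nat \<Rightarrow> (nat \<Rightarrow> nat set) \<Rightarrow> nat set \<Rightarrow> nat" where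
  "ell_star V A S M D = (LEAST L. has_index_code V A S M D L)"

end

theory Submission
  imports Defs
begin

text \<open>
  In every index code for the original instance the codeword alone already determines x_v, so
  the dummy receiver is served without extra transmissions. Message-disconnectedness yields an
  arc (a, b), reachable from v inside the SCC, whose endpoints lie in different components of
  the message graph. Since each sender only sees one component, the codeword cannot tell how
  the bits are distributed across components, so receiver b must recover x_a from the codeword
  alone; decoding along the path from v to a carries this back to x_v. On the graph side the
  new vertex is a sink hanging off C: C stops being a leaf SCC, no other leaf SCC changes, and
  v already had an outgoing arc.
\<close>

definition codeword :: "nat \<Rightarrow> (nat \<Rightarrow> (nat \<Rightarrow> bool) \<Rightarrow> bool list) \<Rightarrow> (nat \<Rightarrow> bool) \<Rightarrow> bool list list" where
  "codeword S E x = map (\<lambda>s. E s x) [0..<S]"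

definition code_determines :: "nat \<Rightarrow> (nat \<Rightarrow> (nat \<Rightarrow> bool) \<Rightarrow> bool list) \<Rightarrow> nat \<Rightarrow> bool" where
  "code_determines S E j \<longleftrightarrow> (\<forall>x y. codeword S E x = codeword S E y \<longrightarrow> x j = y j)"

definition is_index_code ::
  "nat set \<Rightarrow> (nat \<times> nat) set \<Rightarrow> nat \<Rightarrow> (nat \<Rightarrow> nat set) \<Rightarrow> nat set \<Rightarrow>
   (nat \<Rightarrow> nat) \<Rightarrow> (nat \<Rightarrow> (nat \<Rightarrow> bool) \<Rightarrow> bool list) \<Rightarrow> (nat \<Rightarrow> nat \<Rightarrow> bool list list \<Rightarrow> bool \<Rightarrow> bool) \<Rightarrow>
   bool" where
  "is_index_code V A S M D l E Dec \<longleftrightarrow>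
     (\<forall>s<S. \<forall>x y. (\<forall>j\<in>M s. x j = y j) \<longrightarrow> E s x = E s y) \<and>
     (\<forall>s<S. \<forall>x. length (E s x) = l s) \<and>
     (\<forall>i\<in>V. \<forall>j. (j, i) \<in> A \<longrightarrow>
        (\<forall>x. (\<forall>d\<in>D. x d = False) \<longrightarrow> Dec i j (codeword S E x) (x i) = x j))"

lemma has_index_code_iff:
  "has_index_code V A S M D L \<longleftrightarrow>
     (\<exists>l E Dec. is_index_code V A S M D l E Dec \<and> (\<Sum>s<S. l s) = L)"
  unfolding has_index_code_def is_index_code_def codeword_def by blast

lemma codeword_eq_iff: "codeword S E x = codeword S E y \<longleftrightarrow> (\<forall>s<S. E s x = E s y)"
  by (auto simp: codeword_def)

lemma sender_messages_connected:
  assumes "s < S" "i \<in> M s" "j \<in> M s"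
  shows "(i, j) \<in> (msg_edges S M)\<^sup>*"
  using assms by (cases "i = j") (auto simp: msg_edges_def)

lemma sym_msg_edges_rtrancl: "sym ((msg_edges S M)\<^sup>*)"
  by (rule sym_rtrancl) (auto simp: sym_def msg_edges_def)

lemma message_disconnected_from_vertex:
  assumes "message_disconnected S M C" "v \<in> C"
  obtains t where "t \<in> C" "(v, t) \<notin> (msg_edges S M)\<^sup>*"
proof -
  let ?U = "(msg_edges S M)\<^sup>*"
  obtain u w where uw: "u \<in> C" "w \<in> C" "(u, w) \<notin> ?U"
    using assms(1) by (auto simp: message_disconnected_def)
  have "(v, u) \<notin> ?U \<or> (v, w) \<notin> ?U"
    using uw(3) sym_msg_edges_rtrancl by (meson rtrancl_trans symD)
  then show ?thesis using that uw by blast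
qed

lemma rtrancl_arc_not_in_rtrancl:
  assumes "(u, w) \<in> A\<^sup>*" "(u, w) \<notin> U\<^sup>*"
  shows "\<exists>a b. (u, a) \<in> A\<^sup>* \<and> (a, b) \<in> A \<and> (a, b) \<notin> U\<^sup>*"
  using assms
proof (induction rule: rtrancl_induct)
  case base
  then show ?case by simp
next
  case (step y z)
  show ?case
  proof (cases "(u, y) \<in> U\<^sup>*")
    case True
    then have "(y, z) \<notin> U\<^sup>*" using \<open>(u, z) \<notin> U\<^sup>*\<close> by (meson rtrancl_trans)
    then show ?thesis using step.hyps by blast
  next
    case False
    then show ?thesis using step.IH by blast
  qed
qed

text \<open>Every sender's messages lie in one component, so z has the codeword of y; receiver
  b also has the prior message of y, hence decodes z a = x a exactly as it decodes y a.\<close>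

lemma code_determines_across_cut:
  assumes respects: "\<forall>s<S. \<forall>x y. (\<forall>j\<in>M s. x j = y j) \<longrightarrow> E s x = E s y"
    and decodes: "\<And>x. Dec b a (codeword S E x) (x b) = x a"
    and cut: "(a, b) \<notin> (msg_edges S M)\<^sup>*"
  shows "code_determines S E a"
  unfolding code_determines_def
proof (intro allI impI)
  fix x y
  assume same: "codeword S E x = codeword S E y"
  let ?U = "(msg_edges S M)\<^sup>*"
  define z where "z t = (if (a, t) \<in> ?U then x t else y t)" for t
  have "E s z = E s y" if s: "s < S" for s
  proof (cases "\<exists>t\<in>M s. (a, t) \<in> ?U")
    case True
    then have "\<forall>j\<in>M s. z j = x j"
      using sender_messages_connected[OF s] by (auto simp: z_def intro: rtrancl_trans)
    then have "E s z = E s x" using respects s by blast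
    then show ?thesis using same s by (simp add: codeword_eq_iff)
  next
    case False
    then have "\<forall>j\<in>M s. z j = y j" by (auto simp: z_def)
    then show ?thesis using respects s by blast
  qed
  then have "codeword S E z = codeword S E y" by (simp add: codeword_eq_iff)
  moreover have "z b = y b" "z a = x a" using cut by (auto simp: z_def)
  ultimately show "x a = y a" using decodes[of z] decodes[of y] by simp
qed

lemma code_determines_backward:
  assumes decodes: "\<And>i j x. (j, i) \<in> A \<Longrightarrow> Dec i j (codeword S E x) (x i) = x j"
    and "(p, q) \<in> A\<^sup>*" and "code_determines S E q"
  shows "code_determines S E p"
  using assms(2)
proof (induction rule: converse_rtrancl_induct)
  case base
  show ?case by fact
next
  case (step p p')
  show ?case
    unfolding code_determines_def
  proof (intro allI impI)
    fix x y
    assume same: "codeword S E x = codeword S E y"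
    then have "x p' = y p'" using step.IH unfolding code_determines_def by blast
    then show "x p = y p" using same decodes[OF step.hyps(1), of x] decodes[OF step.hyps(1), of y]
      by simp
  qed
qed

lemma code_determines_message_disconnected:
  assumes code: "is_index_code V A S M {} l E Dec" and arcs: "A \<subseteq> V \<times> V"
    and strong: "\<And>u w. u \<in> C \<Longrightarrow> w \<in> C \<Longrightarrow> (u, w) \<in> A\<^sup>*"
    and disconnected: "message_disconnected S M C" and "v \<in> C"
  shows "code_determines S E v"
proof -
  have respects: "\<forall>s<S. \<forall>x y. (\<forall>j\<in>M s. x j = y j) \<longrightarrow> E s x = E s y"
    using code by (simp add: is_index_code_def)
  have decodes: "Dec i j (codeword S E x) (x i) = x j" if "(j, i) \<in> A" for i j x
    using code arcs that by (auto simp: is_index_code_def)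
  obtain t where "t \<in> C" "(v, t) \<notin> (msg_edges S M)\<^sup>*"
    using message_disconnected_from_vertex[OF disconnected \<open>v \<in> C\<close>] .
  moreover have "(v, t) \<in> A\<^sup>*" using strong \<open>v \<in> C\<close> \<open>t \<in> C\<close> .
  ultimately obtain a b where "(v, a) \<in> A\<^sup>*" "(a, b) \<in> A" "(a, b) \<notin> (msg_edges S M)\<^sup>*"
    using rtrancl_arc_not_in_rtrancl[of v t A "msg_edges S M"] by blast
  have determined: "code_determines S E a"
    using code_determines_across_cut[where Dec = Dec and a = a and b = b,
        OF respects decodes[OF \<open>(a, b) \<in> A\<close>] \<open>(a, b) \<notin> _\<close>] .
  show ?thesis
    using decodes \<open>(v, a) \<in> A\<^sup>*\<close> determined by (rule code_determines_backward)
qed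

lemma is_index_code_remove_dummy:
  assumes code: "is_index_code V' A' S M {d} l E Dec"
    and "V \<subseteq> V'" "A \<subseteq> A'" and arcs: "A \<subseteq> V \<times> V" and "d \<notin> V"
    and unknown: "\<forall>s<S. d \<notin> M s"
  shows "is_index_code V A S M {} l E Dec"
proof -
  have "Dec i j (codeword S E x) (x i) = x j" if "i \<in> V" "(j, i) \<in> A" for i j x
  proof -
    let ?x = "x(d := False)"
    have "\<forall>x. (\<forall>d'\<in>{d}. x d' = False) \<longrightarrow> Dec i j (codeword S E x) (x i) = x j"
      using code that assms(2,3) unfolding is_index_code_def by blast
    then have "Dec i j (codeword S E ?x) (?x i) = ?x j" by (metis fun_upd_same singletonD)
    moreover have "codeword S E ?x = codeword S E x"
      using code unknown by (auto simp: is_index_code_def codeword_eq_iff)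
    moreover have "?x i = x i" "?x j = x j" using that arcs \<open>d \<notin> V\<close> by auto
    ultimately show ?thesis by simp
  qed
  then show ?thesis using code by (simp add: is_index_code_def)
qed

lemma is_index_code_add_receiver:
  assumes code: "is_index_code V A S M {} l E Dec" and arcs: "A \<subseteq> V \<times> V"
    and determined: "code_determines S E v"
  obtains Dec' where "is_index_code (insert d V) (insert (v, d) A) S M D l E Dec'"
proof
  \<comment> \<open>The dummy receiver inverts the codeword; every preimage carries the right bit x_v.\<close>
  define Dec' where "Dec' i j cw b =
      (if (j, i) = (v, d) then (SOME y. codeword S E y = cw) v else Dec i j cw b)" for i j cw b
  have "Dec' i j (codeword S E x) (x i) = x j"
    if "i \<in> insert d V" "(j, i) \<in> insert (v, d) A" for i j x
  proof (cases "(j, i) = (v, d)")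
    case True
    have "codeword S E (SOME y. codeword S E y = codeword S E x) = codeword S E x"
      by (rule someI[of "\<lambda>y. codeword S E y = codeword S E x" x]) (rule refl)
    then show ?thesis using True determined by (simp add: Dec'_def code_determines_def)
  next
    case False
    then show ?thesis using that code arcs by (auto simp: Dec'_def is_index_code_def)
  qed
  then show "is_index_code (insert d V) (insert (v, d) A) S M D l E Dec'"
    using code by (simp add: is_index_code_def)
qed

lemma has_index_code_add_dummy_receiver_iff:
  assumes arcs: "A \<subseteq> V \<times> V" and "d \<notin> V" and msgs: "\<forall>s<S. M s \<subseteq> V"
    and strong: "\<And>u w. u \<in> C \<Longrightarrow> w \<in> C \<Longrightarrow> (u, w) \<in> A\<^sup>*"
    and "message_disconnected S M C" and "v \<in> C"
  shows "has_index_code (insert d V) (insert (v, d) A) S M {d} L \<longleftrightarrow> has_index_code V A S M {} L"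
proof
  assume "has_index_code (insert d V) (insert (v, d) A) S M {d} L"
  then obtain l E Dec where code: "is_index_code (insert d V) (insert (v, d) A) S M {d} l E Dec"
    and length: "(\<Sum>s<S. l s) = L"
    by (auto simp: has_index_code_iff)
  have "\<forall>s<S. d \<notin> M s" using msgs \<open>d \<notin> V\<close> by blast
  with code have "is_index_code V A S M {} l E Dec"
    by (rule is_index_code_remove_dummy[OF _ subset_insertI subset_insertI arcs \<open>d \<notin> V\<close>])
  then show "has_index_code V A S M {} L" using length by (auto simp: has_index_code_iff)
next
  assume "has_index_code V A S M {} L"
  then obtain l E Dec where code: "is_index_code V A S M {} l E Dec" "(\<Sum>s<S. l s) = L"
    by (auto simp: has_index_code_iff)
  have "code_determines S E v"
    using code(1) arcs strong assms(5,6) by (rule code_determines_message_disconnected)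
  then obtain Dec' where "is_index_code (insert d V) (insert (v, d) A) S M {d} l E Dec'"
    using is_index_code_add_receiver[OF code(1) arcs] by blast
  then show "has_index_code (insert d V) (insert (v, d) A) S M {d} L"
    using code(2) by (auto simp: has_index_code_iff)
qed

lemma rtrancl_from_non_source:
  assumes "d \<notin> Domain A"
  shows "(d, q) \<in> A\<^sup>* \<longleftrightarrow> q = d"
  using assms by (auto elim: converse_rtranclE)

lemma rtrancl_insert_arc_to_sink:
  assumes "d \<notin> Domain A"
  shows "(p, q) \<in> (insert (v, d) A)\<^sup>* \<longleftrightarrow> (p, q) \<in> A\<^sup>* \<or> (q = d \<and> (p, v) \<in> A\<^sup>*)"
  using rtrancl_from_non_source[OF assms] by (auto simp: rtrancl_insert)

lemma leaf_sccI:
  assumes "C \<noteq> {}" "C \<subseteq> V" "\<And>u w. u \<in> C \<Longrightarrow> w \<in> C \<Longrightarrow> (u, w) \<in> A\<^sup>*"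
    and "\<And>u w. u \<in> C \<Longrightarrow> w \<in> V \<Longrightarrow> (u, w) \<in> A\<^sup>* \<Longrightarrow> (w, u) \<in> A\<^sup>* \<Longrightarrow> w \<in> C"
    and "card C \<ge> 2" "\<And>u w. u \<in> C \<Longrightarrow> (u, w) \<in> A \<Longrightarrow> w \<in> C"
  shows "leaf_scc V A C"
  using assms unfolding leaf_scc_def is_scc_def by blast

lemma leaf_sccD:
  assumes "leaf_scc V A C"
  shows "C \<noteq> {}" "C \<subseteq> V" "\<And>u w. u \<in> C \<Longrightarrow> w \<in> C \<Longrightarrow> (u, w) \<in> A\<^sup>*"
    and "\<And>u w. u \<in> C \<Longrightarrow> w \<in> V \<Longrightarrow> (u, w) \<in> A\<^sup>* \<Longrightarrow> (w, u) \<in> A\<^sup>* \<Longrightarrow> w \<in> C"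
    and "card C \<ge> 2" "\<And>u w. u \<in> C \<Longrightarrow> (u, w) \<in> A \<Longrightarrow> w \<in> C"
  using assms unfolding leaf_scc_def is_scc_def by blast+

lemma is_scc_unique:
  assumes "is_scc V A C" "is_scc V A C'" "v \<in> C" "v \<in> C'"
  shows "C = C'"
proof -
  have "X \<subseteq> Y" if "is_scc V A X" "is_scc V A Y" "v \<in> X" "v \<in> Y" for X Y
  proof
    fix x
    assume "x \<in> X"
    then have "x \<in> V" "(v, x) \<in> A\<^sup>*" "(x, v) \<in> A\<^sup>*"
      using that(1,3) unfolding is_scc_def by auto
    then show "x \<in> Y" using that(2,4) unfolding is_scc_def by blast
  qed
  then show ?thesis using assms by blast
qed

lemma leaf_scc_vertex_has_out_arc:
  assumes "leaf_scc V A C" "v \<in> C"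
  shows "v \<in> Domain A"
proof -
  have "\<not> C \<subseteq> {v}" using leaf_sccD(5)[OF assms(1)] card_mono[of "{v}" C] by auto
  then obtain w where "w \<in> C" "w \<noteq> v" by blast
  then have "(v, w) \<in> A\<^sup>*" using leaf_sccD(3)[OF assms] by blast
  then show ?thesis using \<open>w \<noteq> v\<close> by (metis DomainI converse_rtranclE)
qed

lemma finite_leaf_scc: "finite V \<Longrightarrow> finite {C. leaf_scc V A C}"
  by (rule finite_subset[of _ "Pow V"]) (auto dest: leaf_sccD(2))

lemma leaf_scc_insert_arc_to_sink_iff:
  assumes arcs: "A \<subseteq> V \<times> V" and "d \<notin> V"
  shows "leaf_scc (insert d V) (insert (v, d) A) C \<longleftrightarrow> leaf_scc V A C \<and> v \<notin> C"
proof -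
  let ?A' = "insert (v, d) A"
  have sink: "d \<notin> Domain A" using arcs \<open>d \<notin> V\<close> by auto
  have avoid: "(p, q) \<in> ?A'\<^sup>* \<longleftrightarrow> (p, q) \<in> A\<^sup>*" if "q \<noteq> d" for p q
    using rtrancl_insert_arc_to_sink[OF sink] that by simp
  have from_sink: "(d, q) \<in> ?A'\<^sup>* \<longleftrightarrow> q = d" for q
    using rtrancl_insert_arc_to_sink[OF sink] rtrancl_from_non_source[OF sink] by auto
  have mono: "(p, q) \<in> ?A'\<^sup>*" if "(p, q) \<in> A\<^sup>*" for p q
    using rtrancl_insert_arc_to_sink[OF sink] that by simp
  show ?thesis
  proof
    assume leaf: "leaf_scc (insert d V) ?A' C"
    have "d \<notin> C"
    proof
      assume "d \<in> C"
      then have "C \<subseteq> {d}" using leaf_sccD(3)[OF leaf] from_sink by blast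
      then show False using leaf_sccD(5)[OF leaf] card_mono[of "{d}" C] by simp
    qed
    then have "v \<notin> C" using leaf_sccD(6)[OF leaf] by blast
    moreover have "leaf_scc V A C"
    proof (rule leaf_sccI)
      show "C \<noteq> {}" "card C \<ge> 2" using leaf_sccD(1,5)[OF leaf] .
      show "C \<subseteq> V" using leaf_sccD(2)[OF leaf] \<open>d \<notin> C\<close> by blast
      show "(u, w) \<in> A\<^sup>*" if "u \<in> C" "w \<in> C" for u w
        using leaf_sccD(3)[OF leaf that] avoid[of w u] that(2) \<open>d \<notin> C\<close> by blast
      show "w \<in> C" if "u \<in> C" "w \<in> V" "(u, w) \<in> A\<^sup>*" "(w, u) \<in> A\<^sup>*" for u w
        using leaf_sccD(4)[OF leaf] that mono by blast
      show "w \<in> C" if "u \<in> C" "(u, w) \<in> A" for u w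
        using leaf_sccD(6)[OF leaf] that by blast
    qed
    ultimately show "leaf_scc V A C \<and> v \<notin> C" by blast
  next
    assume "leaf_scc V A C \<and> v \<notin> C"
    then have leaf: "leaf_scc V A C" and "v \<notin> C" by blast+
    have "d \<notin> C" using leaf_sccD(2)[OF leaf] \<open>d \<notin> V\<close> by blast
    show "leaf_scc (insert d V) ?A' C"
    proof (rule leaf_sccI)
      show "C \<noteq> {}" "card C \<ge> 2" using leaf_sccD(1,5)[OF leaf] .
      show "C \<subseteq> insert d V" using leaf_sccD(2)[OF leaf] by blast
      show "(u, w) \<in> ?A'\<^sup>*" if "u \<in> C" "w \<in> C" for u w
        using leaf_sccD(3)[OF leaf that] mono by blast
      show "w \<in> C" if "u \<in> C" "w \<in> insert d V" "(u, w) \<in> ?A'\<^sup>*" "(w, u) \<in> ?A'\<^sup>*" for u w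
      proof -
        have "u \<noteq> d" using that(1) \<open>d \<notin> C\<close> by blast
        then have "w \<noteq> d" using that(4) from_sink by blast
        then show ?thesis
          using leaf_sccD(4)[OF leaf that(1)] that(2-4) avoid \<open>u \<noteq> d\<close> by blast
      qed
      show "w \<in> C" if "u \<in> C" "(u, w) \<in> ?A'" for u w
        using leaf_sccD(6)[OF leaf] that \<open>v \<notin> C\<close> by blast
    qed
  qed
qed

lemma V_out_insert_arc_to_sink:
  assumes "v \<in> Domain A" "d \<notin> Domain A"
  shows "V_out (insert d V) (insert (v, d) A) = V_out V A"
proof -
  have "{i \<in> insert d V. \<exists>j. (i, j) \<in> insert (v, d) A} = {i \<in> V. \<exists>j. (i, j) \<in> A}"
    using assms by auto
  then show ?thesis by (simp add: V_out_def)
qed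

theorem proposition1:
  fixes n S :: nat and A :: "(nat \<times> nat) set" and M :: "nat \<Rightarrow> nat set"
    and C :: "nat set" and v :: nat
  assumes "wf_instance n A S M"
    and "leaf_scc {1..n} A C"
    and "message_disconnected S M C"
    and "v \<in> C"
  shows "N_SCC {1..Suc n} (insert (v, Suc n) A) = N_SCC {1..n} A - 1
    \<and> ell_star {1..Suc n} (insert (v, Suc n) A) S M {Suc n} = ell_star {1..n} A S M {}
    \<and> V_out {1..Suc n} (insert (v, Suc n) A) = V_out {1..n} A"
proof -
  have arcs: "A \<subseteq> {1..n} \<times> {1..n}" and msgs: "\<forall>s<S. M s \<subseteq> {1..n}"
    using assms(1) by (auto simp: wf_instance_def)
  have dummy: "{1..Suc n} = insert (Suc n) {1..n}" "Suc n \<notin> {1..n}" by auto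
  have "leaf_scc {1..Suc n} (insert (v, Suc n) A) C' \<longleftrightarrow> leaf_scc {1..n} A C' \<and> C' \<noteq> C" for C'
    using leaf_scc_insert_arc_to_sink_iff[OF arcs dummy(2)] is_scc_unique[of _ _ C' C v]
      assms(2,4) unfolding dummy(1) leaf_scc_def by blast
  then have "{C'. leaf_scc {1..Suc n} (insert (v, Suc n) A) C'} = {C'. leaf_scc {1..n} A C'} - {C}"
    by blast
  then have "N_SCC {1..Suc n} (insert (v, Suc n) A) = N_SCC {1..n} A - 1"
    unfolding N_SCC_def using finite_leaf_scc[of "{1..n}" A] assms(2) by (simp add: card_Diff_singleton)
  moreover have "ell_star {1..Suc n} (insert (v, Suc n) A) S M {Suc n} = ell_star {1..n} A S M {}"
    using has_index_code_add_dummy_receiver_iff[where C = C, OF arcs dummy(2) msgs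
        leaf_sccD(3)[OF assms(2)] assms(3,4)]
    unfolding ell_star_def dummy(1) by (intro arg_cong[where f = Least] ext) simp
  moreover have "V_out {1..Suc n} (insert (v, Suc n) A) = V_out {1..n} A"
  proof -
    have "Suc n \<notin> Domain A" using arcs dummy(2) by blast
    then show ?thesis unfolding dummy(1)
      by (rule V_out_insert_arc_to_sink[OF leaf_scc_vertex_has_out_arc[OF assms(2,4)]])
  qed
  ultimately show ?thesis by blast
qed

end
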